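(* Let $\tau$ be a strongly $(n,p;a,c)$ regular graph with $0<c<p<n-1$, whose adjacency matrix has eigenvalues $p$, $r$ and $s$, where $r=\frac{a-c+\sqrt{(a-c)^2+4(p-c)}}{2}$ and $s=\frac{a-c-\sqrt{(a-c)^2+4(p-c)}}{2}$. Then \begin{align*} &(rn+p-r)^3+(-n+p-r)^3p+(p-r)^3(n-p-1)\ge 0,\\ &(rn+p-s)^3+(-n+p-s)^3p+(p-s)^3(n-p-1)\ge 0,\\ &(rn+p-r)^2(rn+p-s)+(-n+p-r)^2(-n+p-s)p+(p-r)^2(p-s)(n-p-1)\ge 0,\\ &(rn+p-r)(rn+p-s)^2+(-n+p-r)(-n+p-s)^2p+(p-r)(p-s)^2(n-p-1)\ge 0,\\ &(|s|n+s-p)^2(rn+p-s)+(n+s-p)^2(-n+p-s)p+(s-p)^2(p-s)(n-p-1)\ge 0. \end{align*}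
   Context: A graph is strongly $(n,p;a,c)$ regular if it is a simple graph on $n$ vertices, not complete and not null, every vertex has exactly $p$ neighbours, every pair of adjacent vertices has exactly $a$ common neighbours, and every pair of distinct non-adjacent vertices has exactly $c$ common neighbours. *)

theory Defs
  imports Main Complex_Main
begin

definition strongly_regular ::
  "'v set \<Rightarrow> ('v \<Rightarrow> 'v \<Rightarrow> bool) \<Rightarrow> nat \<Rightarrow> nat \<Rightarrow> nat \<Rightarrow> nat \<Rightarrow> bool" where
  "strongly_regular V E n p a c \<longleftrightarrow>
     finite V \<and> card V = n \<and>
     (\<forall>x\<in>V. \<not> E x x) \<and>
     (\<forall>x\<in>V. \<forall>y\<in>V. E x y \<longrightarrow> E y x) \<and>
     (\<exists>x\<in>V. \<exists>y\<in>V. x \<noteq> y \<and> \<not> E x y) \<and>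
     (\<exists>x\<in>V. \<exists>y\<in>V. E x y) \<and>
     (\<forall>x\<in>V. card {z\<in>V. E x z} = p) \<and>
     (\<forall>x\<in>V. \<forall>y\<in>V. E x y \<longrightarrow> card {z\<in>V. E x z \<and> E y z} = a) \<and>
     (\<forall>x\<in>V. \<forall>y\<in>V. x \<noteq> y \<and> \<not> E x y \<longrightarrow> card {z\<in>V. E x z \<and> E y z} = c)"

end

theory Submission
  imports Defs
begin

text \<open>Let \<open>E\<^sub>0 = J/n, E\<^sub>r, E\<^sub>s\<close> be the minimal idempotents of the Bose--Mesner
algebra. Up to the factor \<open>n\<close>, each of the five expressions is the entry sum of a Hadamard
product of three matrices among \<open>n (r - s) E\<^sub>s\<close>, \<open>n (r - s) (E\<^sub>s + E\<^sub>0)\<close> and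
\<open>n (r - s) E\<^sub>r\<close>. Each such matrix \<open>M\<close> is symmetric with \<open>M\<^sup>2 = n (r - s) M\<close>, hence a
Gram matrix, and the entry sum of a Hadamard product of Gram matrices is a sum of squares
(the Krein conditions).\<close>

lemma gram_of_scaled_idempotent:
  fixes M :: "'v \<Rightarrow> 'v \<Rightarrow> real"
  assumes "lam > 0"
    and sym: "\<And>x y. x \<in> V \<Longrightarrow> y \<in> V \<Longrightarrow> M x y = M y x"
    and sq: "\<And>x y. x \<in> V \<Longrightarrow> y \<in> V \<Longrightarrow> (\<Sum>z\<in>V. M x z * M z y) = lam * M x y"
    and "x \<in> V" "y \<in> V"
  shows "M x y = (\<Sum>z\<in>V. (M z x / sqrt lam) * (M z y / sqrt lam))"
proof -
  have "(\<Sum>z\<in>V. (M z x / sqrt lam) * (M z y / sqrt lam)) = (\<Sum>z\<in>V. M x z * M z y) / lam"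
    unfolding sum_divide_distrib
    by (rule sum.cong) (use assms in \<open>auto simp: real_sqrt_mult[symmetric]\<close>)
  then show ?thesis using sq[OF \<open>x \<in> V\<close> \<open>y \<in> V\<close>] \<open>lam > 0\<close> by simp
qed

lemma sum_hadamard3_gram_nonneg:
  fixes M1 M2 M3 :: "'v \<Rightarrow> 'v \<Rightarrow> real"
  assumes "finite V"
    and h1: "\<And>x y. x \<in> V \<Longrightarrow> y \<in> V \<Longrightarrow> M1 x y = (\<Sum>z\<in>V. f1 z x * f1 z y)"
    and h2: "\<And>x y. x \<in> V \<Longrightarrow> y \<in> V \<Longrightarrow> M2 x y = (\<Sum>z\<in>V. f2 z x * f2 z y)"
    and h3: "\<And>x y. x \<in> V \<Longrightarrow> y \<in> V \<Longrightarrow> M3 x y = (\<Sum>z\<in>V. f3 z x * f3 z y)"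
  shows "0 \<le> (\<Sum>x\<in>V. \<Sum>y\<in>V. M1 x y * M2 x y * M3 x y)"
proof -
  define g where "g q x = (case q of (t, w, z) \<Rightarrow> f1 z x * f2 w x * f3 t x)" for q x
  have entry: "M1 x y * M2 x y * M3 x y = (\<Sum>q\<in>V \<times> V \<times> V. g q x * g q y)"
    if "x \<in> V" "y \<in> V" for x y
  proof -
    have "M1 x y * M2 x y * M3 x y
       = (\<Sum>z\<in>V. f1 z x * f1 z y) * (\<Sum>w\<in>V. f2 w x * f2 w y) * (\<Sum>t\<in>V. f3 t x * f3 t y)"
      using that h1 h2 h3 by simp
    also have "\<dots> = (\<Sum>t\<in>V. \<Sum>w\<in>V. \<Sum>z\<in>V. (f1 z x * f1 z y) * (f2 w x * f2 w y) * (f3 t x * f3 t y))"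
      by (simp add: sum_distrib_left sum_distrib_right mult.assoc)
    also have "\<dots> = (\<Sum>(t,w,z)\<in>V \<times> V \<times> V. (f1 z x * f1 z y) * (f2 w x * f2 w y) * (f3 t x * f3 t y))"
      by (simp add: sum.cartesian_product)
    also have "\<dots> = (\<Sum>q\<in>V \<times> V \<times> V. g q x * g q y)"
      by (rule sum.cong) (auto simp: g_def)
    finally show ?thesis .
  qed
  have "(\<Sum>x\<in>V. \<Sum>y\<in>V. M1 x y * M2 x y * M3 x y)
      = (\<Sum>x\<in>V. \<Sum>y\<in>V. \<Sum>q\<in>V \<times> V \<times> V. g q x * g q y)"
    using entry by simp
  also have "\<dots> = (\<Sum>q\<in>V \<times> V \<times> V. \<Sum>x\<in>V. \<Sum>y\<in>V. g q x * g q y)"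
    by (subst sum.swap) (intro sum.cong refl sum.swap)
  also have "\<dots> = (\<Sum>q\<in>V \<times> V \<times> V. (\<Sum>x\<in>V. g q x)^2)"
    by (simp add: power2_eq_square sum_product)
  finally show ?thesis by (simp add: sum_nonneg)
qed

locale strongly_regular_graph =
  fixes V :: "'v set" and E :: "'v \<Rightarrow> 'v \<Rightarrow> bool" and n p a c :: nat
  assumes srg: "strongly_regular V E n p a c"
begin

lemma finite_V: "finite V" and card_V: "card V = n" and irrefl: "\<And>x. x \<in> V \<Longrightarrow> \<not> E x x"
  and sym: "\<And>x y. x \<in> V \<Longrightarrow> y \<in> V \<Longrightarrow> E x y \<Longrightarrow> E y x"
  and degree: "\<And>x. x \<in> V \<Longrightarrow> card {z\<in>V. E x z} = p"
  and common_adj: "\<And>x y. x \<in> V \<Longrightarrow> y \<in> V \<Longrightarrow> E x y \<Longrightarrow> card {z\<in>V. E x z \<and> E y z} = a"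
  and common_nonadj: "\<And>x y. x \<in> V \<Longrightarrow> y \<in> V \<Longrightarrow> x \<noteq> y \<Longrightarrow> \<not> E x y \<Longrightarrow>
      card {z\<in>V. E x z \<and> E y z} = c"
  and V_nonempty: "V \<noteq> {}"
  using srg unfolding strongly_regular_def by blast+

definition adj :: "'v \<Rightarrow> 'v \<Rightarrow> real" where "adj x y = (if E x y then 1 else 0)"
definition ident :: "'v \<Rightarrow> 'v \<Rightarrow> real" where "ident x y = (if x = y then 1 else 0)"

definition bose_mesner :: "real \<Rightarrow> real \<Rightarrow> real \<Rightarrow> 'v \<Rightarrow> 'v \<Rightarrow> real" where
  "bose_mesner \<alpha> \<beta> \<gamma> x y = \<alpha> + \<beta> * ident x y + \<gamma> * adj x y"

text \<open>The coefficient equations of \<open>(\<alpha> J + \<beta> I + \<gamma> A)\<^sup>2 = lam (\<alpha> J + \<beta> I + \<gamma> A)\<close>.\<close>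
definition scaled_idempotent :: "real \<Rightarrow> real \<Rightarrow> real \<Rightarrow> real \<Rightarrow> bool" where
  "scaled_idempotent lam \<alpha> \<beta> \<gamma> \<longleftrightarrow>
     \<alpha>^2 * n + 2*\<alpha>*\<beta> + 2*\<alpha>*\<gamma>*p + \<gamma>^2 * c = lam * \<alpha> \<and>
     \<beta>^2 + \<gamma>^2 * (real p - real c) = lam * \<beta> \<and>
     2*\<beta>*\<gamma> + \<gamma>^2 * (real a - real c) = lam * \<gamma>"

lemma bose_mesner_sym: "x \<in> V \<Longrightarrow> y \<in> V \<Longrightarrow> bose_mesner \<alpha> \<beta> \<gamma> x y = bose_mesner \<alpha> \<beta> \<gamma> y x"
  unfolding bose_mesner_def adj_def ident_def using sym by auto

lemma sum_adj: "x \<in> V \<Longrightarrow> (\<Sum>z\<in>V. adj x z) = p"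
proof -
  assume "x \<in> V"
  have "(\<Sum>z\<in>V. adj x z) = (\<Sum>z\<in>{z\<in>V. E x z}. (1::real))"
    unfolding adj_def by (simp only: sum.inter_filter[OF finite_V])
  then show ?thesis using degree[OF \<open>x \<in> V\<close>] by simp
qed

lemma sum_adj': "y \<in> V \<Longrightarrow> (\<Sum>z\<in>V. adj z y) = p"
proof -
  assume "y \<in> V"
  then have "(\<Sum>z\<in>V. adj z y) = (\<Sum>z\<in>V. adj y z)"
    by (intro sum.cong) (auto simp: adj_def sym)
  then show ?thesis using sum_adj[OF \<open>y \<in> V\<close>] by simp
qed

lemma sum_ident_left: "x \<in> V \<Longrightarrow> (\<Sum>z\<in>V. ident x z * f z) = f x"
proof -
  assume "x \<in> V"
  have "(\<Sum>z\<in>V. ident x z * f z) = (\<Sum>z\<in>V. if x = z then f z else 0)"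
    by (rule sum.cong) (auto simp: ident_def)
  then show ?thesis using finite_V \<open>x \<in> V\<close> by simp
qed

lemma sum_ident_right: "y \<in> V \<Longrightarrow> (\<Sum>z\<in>V. f z * ident z y) = f y"
  using sum_ident_left[of y f] by (simp add: ident_def mult.commute eq_commute)

lemma adj_square:
  assumes x: "x \<in> V" and y: "y \<in> V"
  shows "(\<Sum>z\<in>V. adj x z * adj z y) = p * ident x y + a * adj x y + c * (1 - ident x y - adj x y)"
proof -
  have "(\<Sum>z\<in>V. adj x z * adj z y) = (\<Sum>z\<in>V. if E x z \<and> E y z then 1 else 0)"
    by (rule sum.cong) (use y sym in \<open>auto simp: adj_def\<close>)
  also have "\<dots> = (\<Sum>z\<in>{z\<in>V. E x z \<and> E y z}. 1)"
    by (simp only: sum.inter_filter[OF finite_V])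
  also have "\<dots> = card {z\<in>V. E x z \<and> E y z}" by simp
  also have "\<dots> = p * ident x y + a * adj x y + c * (1 - ident x y - adj x y)"
    using degree[OF x] irrefl[OF x] common_adj[OF x y] common_nonadj[OF x y]
    by (cases "x = y"; cases "E x y") (auto simp: ident_def adj_def)
  finally show ?thesis .
qed

lemma sum_row:
  fixes h :: "real \<Rightarrow> real \<Rightarrow> real"
  assumes "x \<in> V"
  shows "(\<Sum>y\<in>V. h (ident x y) (adj x y)) = h 1 0 + p * h 0 1 + (real n - p - 1) * h 0 0"
proof -
  have "(\<Sum>y\<in>V. h (ident x y) (adj x y))
      = (\<Sum>y\<in>V. ident x y * (h 1 0 - h 0 0) + adj x y * (h 0 1 - h 0 0) + h 0 0)"
    by (rule sum.cong) (use assms irrefl in \<open>auto simp: ident_def adj_def\<close>)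
  also have "\<dots> = (\<Sum>y\<in>V. ident x y) * (h 1 0 - h 0 0) + (\<Sum>y\<in>V. adj x y) * (h 0 1 - h 0 0)
      + card V * h 0 0"
    by (simp add: sum.distrib sum_distrib_right)
  finally show ?thesis
    using sum_ident_left[OF assms, of "\<lambda>_. 1"] sum_adj[OF assms] card_V by (simp add: algebra_simps)
qed

text \<open>The classical identity \<open>p (p - a - 1) = (n - p - 1) c\<close>, from counting paths of length two.\<close>
lemma path_count: "real p * p = (real a - real c) * p + (real p - real c) + real c * n"
proof -
  obtain x where x: "x \<in> V" using V_nonempty by blast
  have "(\<Sum>y\<in>V. \<Sum>z\<in>V. adj x z * adj z y) = (\<Sum>z\<in>V. adj x z * (\<Sum>y\<in>V. adj z y))"
    by (simp add: sum_distrib_left, rule sum.swap)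
  also have "\<dots> = p * p"
    using sum_adj[OF x] by (simp add: sum_adj sum_distrib_right[symmetric])
  finally have "p * p = (\<Sum>y\<in>V. p * ident x y + a * adj x y + c * (1 - ident x y - adj x y))"
    by (simp add: adj_square x)
  also have "\<dots> = p + a * p + c * (real n - 1 - p)"
    using sum_row[OF x, of "\<lambda>d e. real p * d + real a * e + real c * (1 - d - e)"] by simp
  finally show ?thesis by (simp add: algebra_simps)
qed

lemma bose_mesner_square:
  assumes x: "x \<in> V" and y: "y \<in> V"
  shows "(\<Sum>z\<in>V. bose_mesner \<alpha> \<beta> \<gamma> x z * bose_mesner \<alpha> \<beta> \<gamma> z y) =
     bose_mesner (\<alpha>^2 * n + 2*\<alpha>*\<beta> + 2*\<alpha>*\<gamma>*p + \<gamma>^2 * c) (\<beta>^2 + \<gamma>^2 * (real p - real c))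
       (2*\<beta>*\<gamma> + \<gamma>^2 * (real a - real c)) x y"
proof -
  have "bose_mesner \<alpha> \<beta> \<gamma> x z * bose_mesner \<alpha> \<beta> \<gamma> z y =
     \<alpha>^2 + \<alpha>*\<beta> * ident z y + \<alpha>*\<gamma> * adj z y + \<alpha>*\<beta> * ident x z + \<beta>^2 * (ident x z * ident z y)
     + \<beta>*\<gamma> * (ident x z * adj z y) + \<alpha>*\<gamma> * adj x z + \<beta>*\<gamma> * (adj x z * ident z y)
     + \<gamma>^2 * (adj x z * adj z y)" for z
    unfolding bose_mesner_def by (simp add: algebra_simps power2_eq_square)
  then have "(\<Sum>z\<in>V. bose_mesner \<alpha> \<beta> \<gamma> x z * bose_mesner \<alpha> \<beta> \<gamma> z y) =
     \<alpha>^2 * card V + \<alpha>*\<beta> * (\<Sum>z\<in>V. ident z y) + \<alpha>*\<gamma> * (\<Sum>z\<in>V. adj z y)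
     + \<alpha>*\<beta> * (\<Sum>z\<in>V. ident x z) + \<beta>^2 * (\<Sum>z\<in>V. ident x z * ident z y)
     + \<beta>*\<gamma> * (\<Sum>z\<in>V. ident x z * adj z y) + \<alpha>*\<gamma> * (\<Sum>z\<in>V. adj x z)
     + \<beta>*\<gamma> * (\<Sum>z\<in>V. adj x z * ident z y) + \<gamma>^2 * (\<Sum>z\<in>V. adj x z * adj z y)"
    by (simp add: sum.distrib sum_distrib_left)
  also have "\<dots> = \<alpha>^2 * n + \<alpha>*\<beta> + \<alpha>*\<gamma> * p + \<alpha>*\<beta> + \<beta>^2 * ident x y + \<beta>*\<gamma> * adj x y
     + \<alpha>*\<gamma> * p + \<beta>*\<gamma> * adj x y + \<gamma>^2 * (p * ident x y + a * adj x y + c * (1 - ident x y - adj x y))"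
    using sum_ident_left[OF x, of "\<lambda>_. 1"] sum_ident_right[OF y, of "\<lambda>_. 1"]
    by (simp only: adj_square[OF x y] sum_adj[OF x] sum_adj'[OF y] card_V
        sum_ident_left[OF x] sum_ident_right[OF y] mult_1_right mult_1)
  finally show ?thesis by (simp add: bose_mesner_def algebra_simps power2_eq_square)
qed

lemma gram_bose_mesner:
  assumes "lam > 0" "scaled_idempotent lam \<alpha> \<beta> \<gamma>" "x \<in> V" "y \<in> V"
  shows "bose_mesner \<alpha> \<beta> \<gamma> x y
    = (\<Sum>z\<in>V. (bose_mesner \<alpha> \<beta> \<gamma> z x / sqrt lam) * (bose_mesner \<alpha> \<beta> \<gamma> z y / sqrt lam))"
proof (rule gram_of_scaled_idempotent[OF \<open>lam > 0\<close> bose_mesner_sym _ \<open>x \<in> V\<close> \<open>y \<in> V\<close>])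
  fix x y assume "x \<in> V" "y \<in> V"
  then show "(\<Sum>z\<in>V. bose_mesner \<alpha> \<beta> \<gamma> x z * bose_mesner \<alpha> \<beta> \<gamma> z y) = lam * bose_mesner \<alpha> \<beta> \<gamma> x y"
    using \<open>scaled_idempotent lam \<alpha> \<beta> \<gamma>\<close>
    by (simp add: bose_mesner_square scaled_idempotent_def) (simp add: bose_mesner_def algebra_simps)
qed (auto simp: bose_mesner_sym)

lemma krein_inequality:
  assumes "lam > 0" "n > 0"
    and "scaled_idempotent lam \<alpha>1 \<beta>1 \<gamma>1" "scaled_idempotent lam \<alpha>2 \<beta>2 \<gamma>2"
      "scaled_idempotent lam \<alpha>3 \<beta>3 \<gamma>3"
  shows "0 \<le> (\<alpha>1+\<beta>1)*(\<alpha>2+\<beta>2)*(\<alpha>3+\<beta>3) + real p * ((\<alpha>1+\<gamma>1)*(\<alpha>2+\<gamma>2)*(\<alpha>3+\<gamma>3))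
            + (real n - p - 1) * (\<alpha>1*\<alpha>2*\<alpha>3)"
    (is "0 \<le> ?Q")
proof -
  let ?M1 = "bose_mesner \<alpha>1 \<beta>1 \<gamma>1" and ?M2 = "bose_mesner \<alpha>2 \<beta>2 \<gamma>2"
    and ?M3 = "bose_mesner \<alpha>3 \<beta>3 \<gamma>3"
  have "0 \<le> (\<Sum>x\<in>V. \<Sum>y\<in>V. ?M1 x y * ?M2 x y * ?M3 x y)"
    by (rule sum_hadamard3_gram_nonneg[OF finite_V gram_bose_mesner gram_bose_mesner
          gram_bose_mesner]) (use assms in auto)
  also have "\<dots> = (\<Sum>x\<in>V. ?Q)"
    using sum_row[of _ "\<lambda>d e. (\<alpha>1 + \<beta>1*d + \<gamma>1*e) * (\<alpha>2 + \<beta>2*d + \<gamma>2*e) * (\<alpha>3 + \<beta>3*d + \<gamma>3*e)"]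
    by (intro sum.cong) (simp_all add: bose_mesner_def)
  finally show ?thesis using \<open>n > 0\<close> card_V by (simp add: zero_le_mult_iff)
qed

lemma scaled_idempotent_of_eigenvalues:
  fixes r s t :: real
  assumes "r + s = real a - real c" "r * s = real c - real p" "t = r \<or> t = s"
  shows "scaled_idempotent (real n * (r - s)) (real p - t) (real n * r) (- real n)"
    and "scaled_idempotent (real n * (r - s)) (t - real p) (- real n * s) (real n)"
  using assms path_count unfolding scaled_idempotent_def by (elim disjE; intro conjI; algebra)+

end

theorem mainTheorem4:
  fixes V :: "'v set" and E :: "'v \<Rightarrow> 'v \<Rightarrow> bool" and n p a c :: nat
    and r s :: real
  assumes srg: "strongly_regular V E n p a c"
    and hc: "0 < c" and hcp: "c < p" and hpn: "p < n - 1"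
    and hr: "r = (real a - real c + sqrt ((real a - real c)^2 + 4 * (real p - real c))) / 2"
    and hs: "s = (real a - real c - sqrt ((real a - real c)^2 + 4 * (real p - real c))) / 2"
  shows "((r * real n + real p - r)^3 + (- real n + real p - r)^3 * p + (real p - r)^3 * (real n - real p - 1) \<ge> 0) \<and>
      ((r * real n + real p - s)^3 + (- real n + real p - s)^3 * p + (real p - s)^3 * (real n - real p - 1) \<ge> 0) \<and>
      ((r * real n + real p - r)^2 * (r * real n + real p - s) + (- real n + real p - r)^2 * (- real n + real p - s) * real p
           + (real p - r)^2 * (real p - s) * (real n - real p - 1) \<ge> 0) \<and>
      ((r * real n + real p - r) * (r * real n + real p - s)^2 + (- real n + real p - r) * (- real n + real p - s)^2 * real p
           + (real p - r) * (real p - s)^2 * (real n - real p - 1) \<ge> 0) \<and>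
      ((\<bar>s\<bar> * real n + s - real p)^2 * (r * real n + real p - s) + (real n + s - real p)^2 * (- real n + real p - s) * real p
           + (s - real p)^2 * (real p - s) * (real n - real p - 1) \<ge> 0)"
proof -
  interpret strongly_regular_graph V E n p a c by unfold_locales (rule srg)
  define d where "d = sqrt ((real a - real c)^2 + 4 * (real p - real c))"
  have "real p - real c > 0" using hcp by simp
  then have d_sq: "d^2 = (real a - real c)^2 + 4 * (real p - real c)" and "d > 0"
    unfolding d_def by (simp_all add: add_nonneg_pos)
  have sum_rs: "r + s = real a - real c" and prod_rs: "r * s = real c - real p"
    using d_sq unfolding hr hs d_def[symmetric] by (simp_all add: field_simps power2_eq_square)
  have "r - s > 0" using \<open>d > 0\<close> unfolding hr hs d_def[symmetric] by simp
  then have lam: "n * (r - s) > 0" and "n > 0" using hpn by simp_all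
  have "s \<le> 0" using prod_rs \<open>r - s > 0\<close> hcp by (smt (verit) mult_pos_pos of_nat_less_iff)
  note coeffs = scaled_idempotent_of_eigenvalues[OF sum_rs prod_rs]
  note krein = krein_inequality[OF lam \<open>n > 0\<close>]
  note Es = coeffs(1)[of r] and Es_E0 = coeffs(1)[of s] and Er = coeffs(2)[of s]
  show ?thesis
    using krein[OF Es Es Es] krein[OF Es_E0 Es_E0 Es_E0] krein[OF Es Es Es_E0]
      krein[OF Es Es_E0 Es_E0] krein[OF Er Er Es_E0] \<open>s \<le> 0\<close>
    by (simp add: power2_eq_square power3_eq_cube algebra_simps)
qed

end
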